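(* Let $N = 2^L$ with $L \ge 1$ an integer, let $M, Y \in \mathbb{N}$, and let $r_0, r_1, \ldots, r_{L-1} \in \mathbb{N}_{>0}$. Consider parameters $\mathbf{a}^{0,j,\gamma} \in \mathbb{R}^M$ for $j \in [N]$, $\gamma \in [r_0]$; $\mathbf{a}^{l,j,\gamma} \in \mathbb{R}^{r_{l-1}}$ for $l \in [L-1]$, $j \in [N/2^l]$, $\gamma \in [r_l]$; and $\mathbf{a}^{L,y} \in \mathbb{R}^{r_{L-1}}$ for $y \in [Y]$. From these define recursively $$\phi^{1,j,\gamma} = \sum_{\alpha=1}^{r_0} a^{1,j,\gamma}_\alpha\, \mathbf{a}^{0,2j-1,\alpha} \otimes \mathbf{a}^{0,2j,\alpha}, \qquad j\in[N/2],\ \gamma\in[r_1],$$ $$\phi^{l,j,\gamma} = \sum_{\alpha=1}^{r_{l-1}} a^{l,j,\gamma}_\alpha\, \phi^{l-1,2j-1,\alpha} \otimes \phi^{l-1,2j,\alpha}, \qquad 2\le l\le L-1,\ j\in[N/2^l],\ \gamma\in[r_l],$$ $$\mathcal{A}^y = \sum_{\alpha=1}^{r_{L-1}} a^{L,y}_\alpha\, \phi^{L-1,1,\alpha} \otimes \phi^{L-1,2,\alpha}, \qquad y\in[Y],$$ (when $L=1$, $\mathcal{A}^y=\sum_{\alpha=1}^{r_0}a^{1,y}_\alpha\,\mathbf{a}^{0,1,\alpha}\otimes\mathbf{a}^{0,2,\alpha}$), so that each $\mathcal{A}^y$ is a tensor of order $N$ with dimension $M$ in each mode. Let $r := \min\{r_0,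 M\}$ and fix $y\in[Y]$. Then, in the Euclidean space of all parameter configurations $\{\mathbf{a}^{l,j,\gamma}\}_{l,j,\gamma}$ (all the parameters above), the set of configurations for which the CP-rank of $\mathcal{A}^y$ is less than $r^{N/2}$ has Lebesgue measure zero. The same conclusion holds in the "shared" setting: if one imposes $\mathbf{a}^{l,j,\gamma} = \mathbf{a}^{l,\gamma}$ for all $j$ (for each $l \in \{0,\ldots,L-1\}$ and $\gamma \in [r_l]$), and considers the Euclidean space of configurations of $\{\mathbf{a}^{l,\gamma}\}_{l,\gamma}$ together with $\{\mathbf{a}^{L,y}\}_y$, then the set of configurations for which the CP-rank of $\mathcal{A}^y$ is less than $r^{N/2}$ has Lebesgue measure zero.
   Context: For $k\in\mathbb{N}$, $[k]=\{1,\ldots,k\}$. The tensor product of tensors $\mathcal{A}$ (order $P$) and $\mathcal{B}$ (order $Q$) is the order-$(P+Q)$ tensor $(\mathcal{A}\otimes\mathcal{B})_{d_1\ldots d_{P+Q}} = \mathcal{A}_{d_1\ldots d_P}\mathcal{B}_{d_{P+1}\ldots d_{P+Q}}$. The CP-rank of a tensor $\mathcal{A}$ of order $N$ is the minimal $Z$ such that $\mathcal{A} = \sum_{z=1}^Z \mathbf{v}^{(1)}_z \otimes \cdots \otimes \mathbf{v}^{(N)}_z$ for some vectors $\mathbf{v}^{(i)}_z$. For a vector $\mathbf{a}$, $a_\alpha$ denotes its $\alpha$-th entry. Measure is Lebesgue measure on the Euclidean parameter space. *)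

theory Defs
  imports "HOL-Analysis.Analysis"
begin

text \<open>Tensors of order n with dimension M in each mode are represented as functions
  on index lists ds (length n, entries in {1..M}); values outside are irrelevant.\<close>

definition tprod :: "nat \<Rightarrow> (nat list \<Rightarrow> real) \<Rightarrow> (nat list \<Rightarrow> real) \<Rightarrow> (nat list \<Rightarrow> real)" where
  "tprod P A B = (\<lambda>ds. A (take P ds) * B (drop P ds))"

definition cp_rank :: "nat \<Rightarrow> nat \<Rightarrow> (nat list \<Rightarrow> real) \<Rightarrow> nat" where
  "cp_rank n M A = (LEAST Z. \<exists>v :: nat \<Rightarrow> nat \<Rightarrow> nat \<Rightarrow> real.
      \<forall>ds. length ds = n \<and> set ds \<subseteq> {1..M} \<longrightarrow>
        A ds = (\<Sum>z<Z. \<Prod>i<n. v z i (ds ! i)))"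

text \<open>Number of "gamma" indices at level l: r l for l < L, Y at level L
  (the output weights a^{L,y} are encoded as a^{L,1,y}).\<close>
definition width :: "nat \<Rightarrow> (nat \<Rightarrow> nat) \<Rightarrow> nat \<Rightarrow> nat \<Rightarrow> nat" where
  "width L r Y l = (if l = L then Y else r l)"

definition vlen :: "nat \<Rightarrow> (nat \<Rightarrow> nat) \<Rightarrow> nat \<Rightarrow> nat" where
  "vlen M r l = (if l = 0 then M else r (l - 1))"

text \<open>phi p l j g is the order-2^l tensor phi^{l,j,g}; phi p 0 j g is the vector a^{0,j,g}.
  A parameter configuration p maps (l,j,g,alpha) to the alpha-th entry of a^{l,j,g}.\<close>
fun phi :: "(nat \<Rightarrow> nat) \<Rightarrow> (nat \<times> nat \<times> nat \<times> nat \<Rightarrow> real) \<Rightarrow> nat \<Rightarrow> nat \<Rightarrow> nat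
             \<Rightarrow> (nat list \<Rightarrow> real)" where
  "phi r p 0 j g = (\<lambda>ds. p (0, j, g, hd ds))"
| "phi r p (Suc l) j g = (\<lambda>ds. \<Sum>\<alpha>\<in>{1..r l}.
      p (Suc l, j, g, \<alpha>) * tprod (2 ^ l) (phi r p l (2 * j - 1) \<alpha>) (phi r p l (2 * j) \<alpha>) ds)"

definition param_idx :: "nat \<Rightarrow> nat \<Rightarrow> (nat \<Rightarrow> nat) \<Rightarrow> nat \<Rightarrow> (nat \<times> nat \<times> nat \<times> nat) set" where
  "param_idx L M r Y = {(l, j, g, \<alpha>). l \<le> L \<and> j \<in> {1 .. 2 ^ L div 2 ^ l}
      \<and> g \<in> {1 .. width L r Y l} \<and> \<alpha> \<in> {1 .. vlen M r l}}"

definition shared_idx :: "nat \<Rightarrow> nat \<Rightarrow> (nat \<Rightarrow> nat) \<Rightarrow> nat \<Rightarrow> (nat \<times> nat \<times> nat) set" where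
  "shared_idx L M r Y = {(l, g, \<alpha>). l \<le> L \<and> g \<in> {1 .. width L r Y l} \<and> \<alpha> \<in> {1 .. vlen M r l}}"

definition unshare :: "(nat \<times> nat \<times> nat \<Rightarrow> real) \<Rightarrow> (nat \<times> nat \<times> nat \<times> nat \<Rightarrow> real)" where
  "unshare q = (\<lambda>(l, j, g, \<alpha>). q (l, g, \<alpha>))"

end

theory Submission
  imports Defs "HOL-Computational_Algebra.Polynomial" "Jordan_Normal_Form.Determinant"
begin

text \<open>Every entry of \<open>\<A>\<^sup>y\<close> is a polynomial in the parameters, hence so is every minor of the
  matricization of \<open>\<A>\<^sup>y\<close> with the odd modes as rows and the even modes as columns. A CP
  decomposition with \<open>Z\<close> terms factors this matricization through \<open>Z\<close> dimensions, so all its minors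
  of size \<open>r^(N/2)\<close> vanish wherever the CP-rank is below \<open>r^(N/2)\<close>. For the minor indexed
  by \<open>{1..r}^(N/2)\<close> on both sides there is an explicit configuration turning \<open>\<A>\<^sup>y\<close> into a tensor
  power of the \<open>r \<times> r\<close> identity, where the minor equals 1. A polynomial that does not vanish
  identically vanishes only on a null set, and the shared setting is the same argument with
  parameters that are polynomial (indeed coordinate) functions of the shared ones.\<close>

section \<open>Polynomial functions of finitely many real coordinates\<close>

inductive polyfun :: "'i set \<Rightarrow> (('i \<Rightarrow> real) \<Rightarrow> real) \<Rightarrow> bool" for I where
  const: "polyfun I (\<lambda>x. c)"
| var: "i \<in> I \<Longrightarrow> polyfun I (\<lambda>x. x i)"
| add: "polyfun I f \<Longrightarrow> polyfun I g \<Longrightarrow> polyfun I (\<lambda>x. f x + g x)"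
| mult: "polyfun I f \<Longrightarrow> polyfun I g \<Longrightarrow> polyfun I (\<lambda>x. f x * g x)"

lemma polyfun_sum:
  "finite S \<Longrightarrow> (\<And>s. s \<in> S \<Longrightarrow> polyfun I (f s)) \<Longrightarrow> polyfun I (\<lambda>x. \<Sum>s\<in>S. f s x)"
  by (induction S rule: finite_induct) (auto intro: polyfun.intros)

lemma polyfun_prod:
  "finite S \<Longrightarrow> (\<And>s. s \<in> S \<Longrightarrow> polyfun I (f s)) \<Longrightarrow> polyfun I (\<lambda>x. \<Prod>s\<in>S. f s x)"
  by (induction S rule: finite_induct) (auto intro: polyfun.intros)

lemma polyfun_cong: "polyfun I f \<Longrightarrow> (\<And>i. i \<in> I \<Longrightarrow> x i = y i) \<Longrightarrow> f x = f y"
  by (induction rule: polyfun.induct) auto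

lemma polyfun_measurable: "polyfun I f \<Longrightarrow> f \<in> borel_measurable (PiM I (\<lambda>_. lborel))"
  by (induction rule: polyfun.induct) auto

lemma polyfun_det:
  assumes "\<And>i j. i < n \<Longrightarrow> j < n \<Longrightarrow> polyfun I (\<lambda>x. f x i j)"
  shows "polyfun I (\<lambda>x. det (mat n n (\<lambda>(i, j). f x i j)))"
proof -
  have "polyfun I (\<lambda>x. \<Sum>p \<in> {p. p permutes {0..<n}}. signof p * (\<Prod>i = 0..<n. f x i (p i)))"
    using assms by (intro polyfun_sum polyfun_prod polyfun.mult polyfun.const)
      (auto simp: finite_permutations dest: permutes_in_image)
  moreover have "det (mat n n (\<lambda>(i, j). f x i j))
      = (\<Sum>p \<in> {p. p permutes {0..<n}}. signof p * (\<Prod>i = 0..<n. f x i (p i)))" for x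
    unfolding det_def'[OF mat_carrier]
    by (intro sum.cong refl arg_cong2[where f = "(*)"] prod.cong) (auto dest: permutes_in_image)
  ultimately show ?thesis by simp
qed

lemma polyfun_insert_coeffs:
  assumes "polyfun (insert i I) f"
  shows "\<exists>P. (\<forall>k. polyfun I (\<lambda>x. coeff (P x) k)) \<and> (\<forall>x. f x = poly (P x) (x i))"
  using assms
proof (induction rule: polyfun.induct)
  case (const c)
  have "polyfun I (\<lambda>x. coeff [:c:] k)" for k
    by (cases k) (auto intro: polyfun.const)
  then show ?case by (intro exI[of _ "\<lambda>x. [:c:]"]) auto
next
  case (var j)
  show ?case
  proof (cases "j = i")
    case True
    have "polyfun I (\<lambda>x. coeff [:0, 1:] k)" for k
      by (auto simp: coeff_pCons split: nat.splits intro: polyfun.const)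
    then show ?thesis using True by (intro exI[of _ "\<lambda>x. [:0, 1:]"]) auto
  next
    case False
    with var have "polyfun I (\<lambda>x. coeff [:x j:] k)" for k
      by (cases k) (auto intro: polyfun.intros)
    then show ?thesis by (intro exI[of _ "\<lambda>x. [:x j:]"]) auto
  qed
next
  case (add f g)
  then obtain P Q where "\<forall>k. polyfun I (\<lambda>x. coeff (P x) k)" "\<forall>x. f x = poly (P x) (x i)"
    "\<forall>k. polyfun I (\<lambda>x. coeff (Q x) k)" "\<forall>x. g x = poly (Q x) (x i)" by blast
  then show ?case by (intro exI[of _ "\<lambda>x. P x + Q x"]) (auto intro: polyfun.add)
next
  case (mult f g)
  then obtain P Q where PQ: "\<forall>k. polyfun I (\<lambda>x. coeff (P x) k)" "\<forall>x. f x = poly (P x) (x i)"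
    "\<forall>k. polyfun I (\<lambda>x. coeff (Q x) k)" "\<forall>x. g x = poly (Q x) (x i)" by blast
  have "polyfun I (\<lambda>x. coeff (P x * Q x) k)" for k
    unfolding coeff_mult using PQ by (auto intro!: polyfun_sum polyfun.mult)
  then show ?case using PQ by (intro exI[of _ "\<lambda>x. P x * Q x"]) auto
qed

lemma (in product_sigma_finite) null_sets_PiM_insert:
  assumes "finite I" "i \<notin> I" and Z: "Z \<in> sets (PiM (insert i I) M)"
    and sections: "AE x in PiM I M. AE y in M i. x(i := y) \<notin> Z"
  shows "Z \<in> null_sets (PiM (insert i I) M)"
proof -
  have "emeasure (PiM (insert i I) M) Z
      = (\<integral>\<^sup>+ x. (\<integral>\<^sup>+ y. indicator Z (x(i := y)) \<partial>M i) \<partial>PiM I M)"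
    using assms by (simp flip: nn_integral_indicator add: product_nn_integral_insert)
  also have "\<dots> = (\<integral>\<^sup>+ x. 0 \<partial>PiM I M)"
  proof (rule nn_integral_cong_AE)
    show "AE x in PiM I M. (\<integral>\<^sup>+ y. indicator Z (x(i := y)) \<partial>M i) = 0"
      using sections
    proof eventually_elim
      case (elim x)
      then have "AE y in M i. indicator Z (x(i := y)) = (0 :: ennreal)"
        by eventually_elim simp
      then show ?case using nn_integral_cong_AE by fastforce
    qed
  qed
  finally show ?thesis using Z by auto
qed

lemma AE_lborel_poly_nonzero:
  fixes p :: "real poly"
  assumes "p \<noteq> 0"
  shows "AE y in lborel. poly p y \<noteq> 0"
  using AE_not_in[OF countable_imp_null_set_lborel[OF countable_finite[OF poly_roots_finite[OF assms]]]]
  by simp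

text \<open>Fubini and induction on the number of variables: for almost every value of the other
  variables some coefficient stays nonzero, and then only finitely many values of the last one
  are zeros.\<close>
lemma polyfun_zero_set_null:
  assumes "finite I" "polyfun I f" "f x\<^sub>0 \<noteq> 0"
  shows "{x \<in> space (PiM I (\<lambda>_. lborel)). f x = 0} \<in> null_sets (PiM I (\<lambda>_. lborel))"
  using assms
proof (induction I arbitrary: f rule: finite_induct)
  case empty
  have "f x \<noteq> 0" for x
    using polyfun_cong[OF empty.prems(1), of x x\<^sub>0] empty.prems(2) by simp
  then show ?case by simp
next
  case (insert i I)
  interpret product_sigma_finite "\<lambda>_. lborel" by standard
  obtain P where P: "\<And>k. polyfun I (\<lambda>x. coeff (P x) k)" "\<And>x. f x = poly (P x) (x i)"
    using polyfun_insert_coeffs[OF insert.prems(1)] by blast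
  have P_update: "P (x(i := y)) = P x" for x y
  proof (rule poly_eqI)
    show "coeff (P (x(i := y))) k = coeff (P x) k" for k
      by (rule polyfun_cong[OF P(1)]) (use insert.hyps in auto)
  qed
  obtain k where k: "coeff (P x\<^sub>0) k \<noteq> 0"
    using insert.prems(2) P(2) by (metis poly_0 poly_eq_iff coeff_0)
  let ?N = "{x \<in> space (PiM I (\<lambda>_. lborel)). coeff (P x) k = 0}"
  have "?N \<in> null_sets (PiM I (\<lambda>_. lborel))"
    by (rule insert.IH[OF P(1) k])
  then have "AE x in PiM I (\<lambda>_. lborel). x \<notin> ?N"
    by (rule AE_not_in)
  then have "AE x in PiM I (\<lambda>_. lborel). AE y in lborel. x(i := y) \<notin> {x. f x = 0}"
    using AE_space
  proof eventually_elim
    case (elim x)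
    then have "P x \<noteq> 0" by auto
    from AE_lborel_poly_nonzero[OF this] show ?case
      by eventually_elim (simp add: P(2) P_update)
  qed
  moreover have "{x \<in> space (PiM (insert i I) (\<lambda>_. lborel)). f x = 0} \<in> sets (PiM (insert i I) (\<lambda>_. lborel))"
    using polyfun_measurable[OF insert.prems(1)] by measurable
  ultimately show ?case
    using insert.hyps by (intro null_sets_PiM_insert) (auto elim: AE_mp)
qed

section \<open>CP decompositions\<close>

definition tensor_indices :: "nat \<Rightarrow> nat \<Rightarrow> nat list set" where
  "tensor_indices n M = {ds. length ds = n \<and> set ds \<subseteq> {1..M}}"

lemma finite_tensor_indices: "finite (tensor_indices n M)"
  using finite_lists_length_eq[of "{1..M}" n] by (simp add: tensor_indices_def conj_commute)

lemma card_tensor_indices: "card (tensor_indices n M) = M ^ n"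
  using card_lists_length_eq[of "{1..M}" n] by (simp add: tensor_indices_def conj_commute)

lemma tensor_indices_mono: "M \<le> M' \<Longrightarrow> tensor_indices n M \<subseteq> tensor_indices n M'"
  by (auto simp: tensor_indices_def)

definition cp_decomposable :: "nat \<Rightarrow> nat \<Rightarrow> nat \<Rightarrow> (nat list \<Rightarrow> real) \<Rightarrow> bool" where
  "cp_decomposable n M Z A \<longleftrightarrow> (\<exists>v :: nat \<Rightarrow> nat \<Rightarrow> nat \<Rightarrow> real.
      \<forall>ds. length ds = n \<and> set ds \<subseteq> {1..M} \<longrightarrow> A ds = (\<Sum>z<Z. \<Prod>i<n. v z i (ds ! i)))"

text \<open>One rank-one term per index tuple: the first factor carries the entry, the others
  are indicator vectors.\<close>
lemma cp_decomposable_exists: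
  assumes "n \<ge> 1"
  shows "\<exists>Z. cp_decomposable n M Z A"
proof -
  let ?D = "tensor_indices n M"
  obtain e where e: "bij_betw e {0..<card ?D} ?D"
    using ex_bij_betw_nat_finite[OF finite_tensor_indices] by blast
  define v where "v z i d = (if i = 0 then A (e z) else 1) * (if d = e z ! i then 1 else 0)"
    for z i d
  have "A ds = (\<Sum>z<card ?D. \<Prod>i<n. v z i (ds ! i))" if ds: "ds \<in> ?D" for ds
  proof -
    have "(\<Prod>i<n. v z i (ds ! i)) = (if e z = ds then A ds else 0)" if "z \<in> {0..<card ?D}" for z
    proof -
      have len: "length (e z) = n" using e that by (auto simp: tensor_indices_def dest: bij_betwE)
      have "(\<Prod>i<n. if i = 0 then A (e z) else 1) = A (e z)"
        using assms by (simp add: prod.delta)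
      moreover have "(\<Prod>i<n. if ds ! i = e z ! i then 1 else 0 :: real)
          = (if e z = ds then 1 else 0)"
        using len ds by (auto simp: tensor_indices_def list_eq_iff_nth_eq prod_zero_iff) (metis lessThan_iff)
      ultimately show ?thesis by (simp add: v_def prod.distrib)
    qed
    then have "(\<Sum>z<card ?D. \<Prod>i<n. v z i (ds ! i)) = (\<Sum>z\<in>{0..<card ?D}. if e z = ds then A ds else 0)"
      by (simp add: atLeast0LessThan)
    also have "\<dots> = (\<Sum>xs\<in>?D. if xs = ds then A ds else 0)"
      using sum.reindex_bij_betw[OF e, of "\<lambda>xs. if xs = ds then A ds else 0"] by simp
    also have "\<dots> = A ds"
      using ds finite_tensor_indices by simp
    finally show ?thesis by simp
  qed
  then show ?thesis unfolding cp_decomposable_def tensor_indices_def by blast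
qed

lemma cp_rank_less_iff:
  assumes "n \<ge> 1"
  shows "cp_rank n M A < K \<longleftrightarrow> (\<exists>Z<K. cp_decomposable n M Z A)"
proof -
  have rank: "cp_rank n M A = (LEAST Z. cp_decomposable n M Z A)"
    by (simp add: cp_rank_def cp_decomposable_def)
  show ?thesis
  proof
    assume "cp_rank n M A < K"
    moreover have "cp_decomposable n M (cp_rank n M A) A"
      unfolding rank using cp_decomposable_exists[OF assms] by (rule LeastI_ex)
    ultimately show "\<exists>Z<K. cp_decomposable n M Z A" by blast
  qed (auto simp: rank dest: Least_le)
qed

text \<open>A CP sum with weights \<open>w (z, i, d)\<close>, extended by zero outside the index set so that the
  tensors with a \<open>Z\<close>-term decomposition form the range of a continuous map.\<close>
definition cp_tensor :: "nat \<Rightarrow> nat \<Rightarrow> nat \<Rightarrow> (nat \<times> nat \<times> nat \<Rightarrow> real) \<Rightarrow> nat list \<Rightarrow> real" where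
  "cp_tensor n M Z w ds =
     (if ds \<in> tensor_indices n M then \<Sum>z<Z. \<Prod>i<n. w (z, i, ds ! i) else 0)"

lemma continuous_on_cp_tensor: "continuous_on UNIV (cp_tensor n M Z)"
  unfolding cp_tensor_def[abs_def]
proof (intro continuous_on_coordinatewise_then_product)
  fix ds :: "nat list"
  show "continuous_on UNIV (\<lambda>w :: nat \<times> nat \<times> nat \<Rightarrow> real. if ds \<in> tensor_indices n M
      then \<Sum>z<Z. \<Prod>i<n. w (z, i, ds ! i) else 0)"
    by (cases "ds \<in> tensor_indices n M")
      (auto intro!: continuous_intros continuous_on_product_coordinates)
qed

lemma compact_abs_le_box: "compact {w :: 'a \<Rightarrow> real. \<forall>x. \<bar>w x\<bar> \<le> m}"
proof -
  have "{w :: 'a \<Rightarrow> real. \<forall>x. \<bar>w x\<bar> \<le> m} = PiE UNIV (\<lambda>_. {-m..m})"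
    by (simp add: set_eq_iff PiE_UNIV_domain Pi_iff abs_le_iff; metis minus_le_iff)
  moreover have "compactin (product_topology (\<lambda>_. euclidean) UNIV) (PiE UNIV (\<lambda>_::'a. {-m..m}))"
    by (subst compactin_PiE) auto
  ultimately show ?thesis by (simp add: euclidean_product_topology)
qed

text \<open>Only finitely many weights enter \<open>cp_tensor\<close>, so its range is the countable union of the
  compact images of boxes.\<close>
lemma range_cp_tensor_borel: "range (cp_tensor n M Z) \<in> sets borel"
proof -
  let ?F = "{..<Z} \<times> {..<n} \<times> {..M}"
  let ?box = "\<lambda>m::nat. {w :: nat \<times> nat \<times> nat \<Rightarrow> real. \<forall>x. \<bar>w x\<bar> \<le> real m}"
  have "cp_tensor n M Z w \<in> (\<Union>m. cp_tensor n M Z ` ?box m)" for w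
  proof -
    define w' where "w' x = (if x \<in> ?F then w x else 0 :: real)" for x
    define S where "S = (\<Sum>x\<in>?F. \<bar>w x\<bar>)"
    have bound: "\<bar>w' x\<bar> \<le> S" for x
      unfolding w'_def S_def by (auto intro: member_le_sum sum_nonneg)
    have "cp_tensor n M Z w' = cp_tensor n M Z w"
    proof
      fix ds
      show "cp_tensor n M Z w' ds = cp_tensor n M Z w ds"
      proof (cases "ds \<in> tensor_indices n M")
        case True
        then have ds: "length ds = n" "set ds \<subseteq> {1..M}"
          by (simp_all add: tensor_indices_def)
        have "(z, i, ds ! i) \<in> ?F" if "z < Z" "i < n" for z i
        proof -
          have "ds ! i \<in> {1..M}"
            using ds that nth_mem[of i ds] by blast
          then show ?thesis using that by simp
        qed
        then show ?thesis
          unfolding cp_tensor_def w'_def using True by (intro if_cong sum.cong prod.cong) auto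
      qed (simp add: cp_tensor_def)
    qed
    moreover have "w' \<in> ?box (nat \<lceil>S\<rceil>)"
      by (simp add: order_trans[OF bound real_nat_ceiling_ge])
    ultimately have "cp_tensor n M Z w \<in> cp_tensor n M Z ` ?box (nat \<lceil>S\<rceil>)"
      by (rule image_eqI[OF sym])
    then show ?thesis by blast
  qed
  then have eq: "range (cp_tensor n M Z) = (\<Union>m. cp_tensor n M Z ` ?box m)" by blast
  have "cp_tensor n M Z ` ?box m \<in> sets borel" for m
    by (intro borel_closed compact_imp_closed compact_continuous_image
        continuous_on_subset[OF continuous_on_cp_tensor] compact_abs_le_box) auto
  then show ?thesis unfolding eq by (intro sets.countable_UN) blast
qed

lemma sets_cp_rank_less:
  assumes "n \<ge> 1"
    and "\<And>ds. length ds = n \<Longrightarrow> set ds \<subseteq> {1..M} \<Longrightarrow> (\<lambda>q. T q ds) \<in> borel_measurable N"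
  shows "{q \<in> space N. cp_rank n M (T q) < K} \<in> sets N"
proof -
  define T' where "T' q ds = (if ds \<in> tensor_indices n M then T q ds else 0)" for q ds
  have "T' \<in> measurable N (PiM UNIV (\<lambda>_. borel))"
    unfolding T'_def
  proof (intro measurable_PiM_single')
    fix ds :: "nat list"
    show "(\<lambda>q. if ds \<in> tensor_indices n M then T q ds else 0) \<in> borel_measurable N"
    proof (cases "ds \<in> tensor_indices n M")
      case True
      then show ?thesis using assms(2) by (simp add: tensor_indices_def)
    qed simp
  qed simp
  then have T': "T' \<in> borel_measurable N"
    by (simp add: measurable_cong_sets[OF refl sets_PiM_equal_borel])
  have decomposable_iff: "cp_decomposable n M Z (T q) \<longleftrightarrow> T' q \<in> range (cp_tensor n M Z)" for q Z
  proof
    assume "cp_decomposable n M Z (T q)"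
    then obtain v :: "nat \<Rightarrow> nat \<Rightarrow> nat \<Rightarrow> real" where
      "\<forall>ds. length ds = n \<and> set ds \<subseteq> {1..M} \<longrightarrow> T q ds = (\<Sum>z<Z. \<Prod>i<n. v z i (ds ! i))"
      by (auto simp: cp_decomposable_def)
    then have "T' q = cp_tensor n M Z (\<lambda>(z, i, d). v z i d)"
      by (intro ext) (simp add: T'_def cp_tensor_def tensor_indices_def)
    then show "T' q \<in> range (cp_tensor n M Z)" by blast
  next
    assume "T' q \<in> range (cp_tensor n M Z)"
    then obtain w where w: "T' q = cp_tensor n M Z w" by blast
    have "T q ds = (\<Sum>z<Z. \<Prod>i<n. w (z, i, ds ! i))" if "length ds = n" "set ds \<subseteq> {1..M}" for ds
      using fun_cong[OF w, of ds] that by (simp add: T'_def cp_tensor_def tensor_indices_def)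
    then show "cp_decomposable n M Z (T q)"
      unfolding cp_decomposable_def by (intro exI[of _ "\<lambda>z i d. w (z, i, d)"]) auto
  qed
  then have "{q \<in> space N. cp_rank n M (T q) < K}
      = (\<Union>Z<K. T' -` range (cp_tensor n M Z) \<inter> space N)"
    unfolding cp_rank_less_iff[OF assms(1)] decomposable_iff by blast
  also have "\<dots> \<in> sets N"
    using measurable_sets[OF T' range_cp_tensor_borel] by (intro sets.finite_UN) auto
  finally show ?thesis .
qed

section \<open>Matricization\<close>

fun interleave :: "'a list \<Rightarrow> 'a list \<Rightarrow> 'a list" where
  "interleave (x # xs) (y # ys) = x # y # interleave xs ys"
| "interleave _ _ = []"

lemma length_interleave: "length xs = length ys \<Longrightarrow> length (interleave xs ys) = 2 * length xs"
  by (induction xs ys rule: interleave.induct) auto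

lemma set_interleave: "set (interleave xs ys) \<subseteq> set xs \<union> set ys"
  by (induction xs ys rule: interleave.induct) auto

lemma interleave_in_tensor_indices:
  "xs \<in> tensor_indices h M \<Longrightarrow> ys \<in> tensor_indices h M \<Longrightarrow> interleave xs ys \<in> tensor_indices (2 * h) M"
  using set_interleave[of xs ys] by (auto simp: tensor_indices_def length_interleave)

lemma nth_interleave:
  assumes "length xs = length ys" "t < length xs"
  shows "interleave xs ys ! (2 * t) = xs ! t" "interleave xs ys ! Suc (2 * t) = ys ! t"
  using assms by (induction xs ys arbitrary: t rule: interleave.induct) (auto simp: less_Suc_eq_0_disj)

lemma prod_lessThan_double: "(\<Prod>i<2 * h. f i) = (\<Prod>t<h. f (2 * t) * f (Suc (2 * t)))"
  by (induction h) (simp_all add: mult.assoc)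

lemma prod_interleave:
  assumes "length xs = h" "length ys = h"
  shows "(\<Prod>i<2 * h. g i (interleave xs ys ! i))
    = (\<Prod>t<h. g (2 * t) (xs ! t)) * (\<Prod>t<h. g (Suc (2 * t)) (ys ! t))"
  using assms by (simp add: prod_lessThan_double nth_interleave prod.distrib)

lemma det_mat_zero_row:
  assumes "k < n" "\<And>j. j < n \<Longrightarrow> f k j = 0"
  shows "det (mat n n (\<lambda>(i, j). f i j)) = 0"
  unfolding det_def'[OF mat_carrier]
proof (intro sum.neutral ballI)
  fix p assume "p \<in> {p. p permutes {0..<n}}"
  then have "p k < n"
    using assms(1) permutes_in_image[of p "{0..<n}" k] by auto
  then have "(\<Prod>i = 0..<n. mat n n (\<lambda>(i, j). f i j) $$ (i, p i)) = 0"
    using assms by (intro prod_zero bexI[of _ k]) auto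
  then show "signof p * (\<Prod>i = 0..<n. mat n n (\<lambda>(i, j). f i j) $$ (i, p i)) = 0"
    by simp
qed

text \<open>Rows are indexed by the odd modes and columns by the even ones; a \<open>Z\<close>-term CP
  decomposition factors the matrix through \<open>Z\<close> dimensions, so a larger square minor vanishes.\<close>
lemma det_interleave_eq_0:
  assumes A: "cp_decomposable (2 * h) M Z A" and "Z < K"
    and xs: "\<And>k. k < K \<Longrightarrow> xs k \<in> tensor_indices h M"
    and ys: "\<And>k. k < K \<Longrightarrow> ys k \<in> tensor_indices h M"
  shows "det (mat K K (\<lambda>(k, k'). A (interleave (xs k) (ys k')))) = 0"
proof -
  obtain v :: "nat \<Rightarrow> nat \<Rightarrow> nat \<Rightarrow> real" where v:
    "\<And>ds. length ds = 2 * h \<Longrightarrow> set ds \<subseteq> {1..M} \<Longrightarrow> A ds = (\<Sum>z<Z. \<Prod>i<2 * h. v z i (ds ! i))"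
    using A by (auto simp: cp_decomposable_def)
  define U where "U = mat K K (\<lambda>(k, z). if z < Z then \<Prod>t<h. v z (2 * t) (xs k ! t) else 0)"
  define V where "V = mat K K (\<lambda>(z, k). if z < Z then \<Prod>t<h. v z (Suc (2 * t)) (ys k ! t) else 0)"
  have U: "U \<in> carrier_mat K K" and V: "V \<in> carrier_mat K K"
    by (auto simp: U_def V_def)
  have "mat K K (\<lambda>(k, k'). A (interleave (xs k) (ys k'))) = U * V"
  proof (rule eq_matI)
    fix k k' assume "k < dim_row (U * V)" "k' < dim_col (U * V)"
    then have k: "k < K" "k' < K" using U V by auto
    have "(U * V) $$ (k, k') = (\<Sum>z\<in>{0..<K}. U $$ (k, z) * V $$ (z, k'))"
      using U V k by (simp add: scalar_prod_def)
    also have "\<dots> = (\<Sum>z\<in>{0..<K}. if z < Z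
        then (\<Prod>t<h. v z (2 * t) (xs k ! t)) * (\<Prod>t<h. v z (Suc (2 * t)) (ys k' ! t)) else 0)"
      using k by (intro sum.cong) (auto simp: U_def V_def)
    also have "\<dots> = (\<Sum>z<Z. (\<Prod>t<h. v z (2 * t) (xs k ! t)) * (\<Prod>t<h. v z (Suc (2 * t)) (ys k' ! t)))"
    proof -
      have "{..<K} \<inter> {z. z < Z} = {..<Z}" using \<open>Z < K\<close> by auto
      then show ?thesis by (simp add: sum.If_cases atLeast0LessThan)
    qed
    also have "\<dots> = (\<Sum>z<Z. \<Prod>i<2 * h. v z i (interleave (xs k) (ys k') ! i))"
      using xs[OF k(1)] ys[OF k(2)] by (simp add: prod_interleave tensor_indices_def)
    also have "\<dots> = A (interleave (xs k) (ys k'))"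
      using interleave_in_tensor_indices[OF xs[OF k(1)] ys[OF k(2)]]
      by (intro v[symmetric]) (simp_all add: tensor_indices_def)
    finally show "mat K K (\<lambda>(k, k'). A (interleave (xs k) (ys k'))) $$ (k, k') = (U * V) $$ (k, k')"
      using k by simp
  qed (use U V in auto)
  moreover have "det V = 0"
    unfolding V_def using \<open>Z < K\<close> by (intro det_mat_zero_row[of "K - 1"]) auto
  ultimately show ?thesis
    by (simp add: det_mult[OF U V])
qed

section \<open>The hierarchical tensors\<close>

lemma children_in_range:
  assumes "Suc l \<le> L" "j \<in> {1..(2::nat) ^ L div 2 ^ Suc l}"
  shows "2 * j - 1 \<in> {1..(2::nat) ^ L div 2 ^ l}" "2 * j \<in> {1..(2::nat) ^ L div 2 ^ l}"
proof -
  have pow: "(2::nat) ^ L div 2 ^ m = 2 ^ (L - m)" if "m \<le> L" for m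
    using that by (simp add: power_diff)
  have "(2::nat) ^ L div 2 ^ l = 2 ^ (L - l)" "(2::nat) ^ L div 2 ^ Suc l = 2 ^ (L - Suc l)"
    using assms(1) pow[of l] pow[of "Suc l"] by simp_all
  moreover have "L - l = Suc (L - Suc l)"
    using assms(1) by simp
  ultimately have "(2::nat) ^ L div 2 ^ l = 2 * (2 ^ L div 2 ^ Suc l)"
    by simp
  then show "2 * j - 1 \<in> {1..(2::nat) ^ L div 2 ^ l}" "2 * j \<in> {1..(2::nat) ^ L div 2 ^ l}"
    using assms(2) by auto
qed

lemma phi_polyfun:
  assumes H: "\<forall>idx\<in>param_idx L M r Y. polyfun J (\<lambda>q. H q idx)"
  shows "l \<le> L \<Longrightarrow> j \<in> {1..2 ^ L div 2 ^ l} \<Longrightarrow> g \<in> {1..width L r Y l}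
    \<Longrightarrow> length ds = 2 ^ l \<Longrightarrow> set ds \<subseteq> {1..M} \<Longrightarrow> polyfun J (\<lambda>q. phi r (H q) l j g ds)"
proof (induction l arbitrary: j g ds)
  case 0
  then have "ds \<noteq> []" by auto
  then have "hd ds \<in> {1..M}"
    using 0 hd_in_set[of ds] by blast
  then show ?case
    using 0 by (auto simp: param_idx_def vlen_def intro: H[rule_format])
next
  case (Suc l)
  have "polyfun J (\<lambda>q. \<Sum>\<alpha>\<in>{1..r l}. H q (Suc l, j, g, \<alpha>) *
      (phi r (H q) l (2 * j - 1) \<alpha> (take (2 ^ l) ds) * phi r (H q) l (2 * j) \<alpha> (drop (2 ^ l) ds)))"
  proof (intro polyfun_sum polyfun.mult)
    fix \<alpha> assume \<alpha>: "\<alpha> \<in> {1..r l}"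
    then show "polyfun J (\<lambda>q. H q (Suc l, j, g, \<alpha>))"
      using Suc.prems by (auto simp: param_idx_def vlen_def intro: H[rule_format])
    have "\<alpha> \<in> {1..width L r Y l}" "set (take (2 ^ l) ds) \<subseteq> {1..M}" "set (drop (2 ^ l) ds) \<subseteq> {1..M}"
      using \<alpha> Suc.prems by (auto simp: width_def dest: in_set_takeD in_set_dropD)
    then show "polyfun J (\<lambda>q. phi r (H q) l (2 * j - 1) \<alpha> (take (2 ^ l) ds))"
      "polyfun J (\<lambda>q. phi r (H q) l (2 * j) \<alpha> (drop (2 ^ l) ds))"
      using Suc.prems children_in_range[OF Suc.prems(1,2)] by (auto intro!: Suc.IH)
  qed simp
  then show ?case by (simp add: tprod_def)
qed

fun diag_pairs :: "nat \<Rightarrow> nat list \<Rightarrow> bool" where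
  "diag_pairs c [] = True"
| "diag_pairs c [x] = False"
| "diag_pairs c (x # y # zs) \<longleftrightarrow> x = y \<and> x \<le> c \<and> diag_pairs c zs"

lemma diag_pairs_append:
  "even (length xs) \<Longrightarrow> diag_pairs c (xs @ ys) \<longleftrightarrow> diag_pairs c xs \<and> diag_pairs c ys"
  by (induction c xs rule: diag_pairs.induct) auto

lemma diag_pairs_interleave:
  "length xs = length ys \<Longrightarrow> diag_pairs c (interleave xs ys) \<longleftrightarrow> xs = ys \<and> (\<forall>x\<in>set xs. x \<le> c)"
  by (induction xs ys rule: interleave.induct) auto

text \<open>The witness configuration: \<open>a^(0,j,\<gamma>)\<close> is the unit vector \<open>e_\<gamma>\<close>, \<open>a^(1,j,\<gamma>)\<close> the
  all-ones vector and every higher \<open>a^(l,j,\<gamma>)\<close> the unit vector \<open>e_1\<close>. Then \<open>\<phi>^(1,j,\<gamma>)\<close> is the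
  identity matrix truncated to \<open>r 0\<close>, and every higher \<open>\<phi>\<close> a tensor power of it.\<close>
definition unit_weights :: "nat \<times> nat \<times> nat \<Rightarrow> real" where
  "unit_weights = (\<lambda>(l, g, \<alpha>).
     if l = 0 then (if \<alpha> = g then 1 else 0) else if l = 1 then 1 else (if \<alpha> = 1 then 1 else 0))"

lemma phi_one_unit_weights:
  assumes p: "\<forall>idx\<in>param_idx L M r Y. p idx = unshare unit_weights idx"
    and "1 \<le> L" "j \<in> {1..2 ^ L div 2}" "g \<in> {1..width L r Y 1}" "a \<in> {1..M}" "b \<in> {1..M}"
  shows "phi r p 1 j g [a, b] = (if a = b \<and> a \<le> r 0 then 1 else 0)"
proof -
  have "phi r p 1 j g [a, b] = (\<Sum>\<alpha>\<in>{1..r 0}. p (1, j, g, \<alpha>) * (p (0, 2 * j - 1, \<alpha>, a) * p (0, 2 * j, \<alpha>, b)))"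
    by (simp add: tprod_def)
  also have "\<dots> = (\<Sum>\<alpha>\<in>{1..r 0}. if \<alpha> = a then (if a = b then 1 else 0) else 0)"
  proof (rule sum.cong[OF refl])
    fix \<alpha> assume "\<alpha> \<in> {1..r 0}"
    then have "(1, j, g, \<alpha>) \<in> param_idx L M r Y" "(0, 2 * j - 1, \<alpha>, a) \<in> param_idx L M r Y"
      "(0, 2 * j, \<alpha>, b) \<in> param_idx L M r Y"
      using assms children_in_range[of 0 L j] by (auto simp: param_idx_def vlen_def width_def)
    then show "p (1, j, g, \<alpha>) * (p (0, 2 * j - 1, \<alpha>, a) * p (0, 2 * j, \<alpha>, b))
        = (if \<alpha> = a then (if a = b then 1 else 0) else 0)"
      by (simp add: p[rule_format] unshare_def unit_weights_def)
  qed
  also have "\<dots> = (if a = b \<and> a \<le> r 0 then 1 else 0)"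
    using assms by (simp add: sum.delta)
  finally show ?thesis .
qed

lemma phi_unit_weights:
  assumes p: "\<forall>idx\<in>param_idx L M r Y. p idx = unshare unit_weights idx"
    and r: "\<forall>l<L. r l > 0"
  shows "1 \<le> l \<Longrightarrow> l \<le> L \<Longrightarrow> j \<in> {1..2 ^ L div 2 ^ l} \<Longrightarrow> g \<in> {1..width L r Y l}
    \<Longrightarrow> length ds = 2 ^ l \<Longrightarrow> set ds \<subseteq> {1..M}
    \<Longrightarrow> phi r p l j g ds = (if diag_pairs (r 0) ds then 1 else 0)"
proof (induction l arbitrary: j g ds rule: nat_induct_at_least)
  case base
  then obtain a b where ds: "ds = [a, b]"
    by (auto simp: numeral_2_eq_2 length_Suc_conv)
  then show ?case
    using base phi_one_unit_weights[OF p] by auto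
next
  case (Suc l)
  let ?ds1 = "take (2 ^ l) ds" and ?ds2 = "drop (2 ^ l) ds"
  have "phi r p (Suc l) j g ds
      = (\<Sum>\<alpha>\<in>{1..r l}. p (Suc l, j, g, \<alpha>) * (phi r p l (2 * j - 1) \<alpha> ?ds1 * phi r p l (2 * j) \<alpha> ?ds2))"
    by (simp add: tprod_def)
  also have "\<dots> = (\<Sum>\<alpha>\<in>{1..r l}. if \<alpha> = 1 then phi r p l (2 * j - 1) 1 ?ds1 * phi r p l (2 * j) 1 ?ds2 else 0)"
  proof (rule sum.cong[OF refl])
    fix \<alpha> assume "\<alpha> \<in> {1..r l}"
    then have "(Suc l, j, g, \<alpha>) \<in> param_idx L M r Y"
      using Suc.prems by (auto simp: param_idx_def vlen_def)
    then show "p (Suc l, j, g, \<alpha>) * (phi r p l (2 * j - 1) \<alpha> ?ds1 * phi r p l (2 * j) \<alpha> ?ds2)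
        = (if \<alpha> = 1 then phi r p l (2 * j - 1) 1 ?ds1 * phi r p l (2 * j) 1 ?ds2 else 0)"
      using Suc.hyps by (simp add: p[rule_format] unshare_def unit_weights_def)
  qed
  also have "\<dots> = phi r p l (2 * j - 1) 1 ?ds1 * phi r p l (2 * j) 1 ?ds2"
    using r[rule_format, of l] Suc.prems by simp
  also have "\<dots> = (if diag_pairs (r 0) ?ds1 then 1 else 0) * (if diag_pairs (r 0) ?ds2 then 1 else 0)"
  proof -
    have "1 \<in> {1..width L r Y l}"
      using r[rule_format, of l] Suc.prems by (simp add: width_def)
    moreover have "set ?ds1 \<subseteq> {1..M}" "set ?ds2 \<subseteq> {1..M}"
      using Suc.prems(5) by (auto dest: in_set_takeD in_set_dropD)
    ultimately show ?thesis
      using Suc.prems children_in_range[OF Suc.prems(1,2)] by (simp add: Suc.IH)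
  qed
  also have "\<dots> = (if diag_pairs (r 0) (?ds1 @ ?ds2) then 1 else 0)"
    using diag_pairs_append[of ?ds1 "r 0" ?ds2] Suc.hyps Suc.prems by simp
  finally show ?case by simp
qed

section \<open>Generic lower bound on the CP-rank\<close>

lemma finite_param_idx: "finite (param_idx L M r Y)"
proof -
  have "param_idx L M r Y = (SIGMA l:{..L}. SIGMA j:{1..2^L div 2^l}. SIGMA g:{1..width L r Y l}. {1..vlen M r l})"
    by (auto simp: param_idx_def)
  then show ?thesis by simp
qed

lemma finite_shared_idx: "finite (shared_idx L M r Y)"
proof -
  have "shared_idx L M r Y = (SIGMA l:{..L}. SIGMA g:{1..width L r Y l}. {1..vlen M r l})"
    by (auto simp: shared_idx_def)
  then show ?thesis by simp
qed

lemma flattening_unit_weights: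
  assumes p: "\<forall>idx\<in>param_idx L M r Y. p idx = unshare unit_weights idx"
    and r: "\<forall>l<L. r l > 0" and L: "L \<ge> 1" and y: "y \<in> {1..Y}" and N: "2 ^ L = 2 * h"
    and R: "R \<le> r 0" "R \<le> M"
    and e: "inj_on e {..<K}" and rows: "\<And>k. k < K \<Longrightarrow> e k \<in> tensor_indices h R"
  shows "mat K K (\<lambda>(k, k'). phi r p L 1 y (interleave (e k) (e k'))) = 1\<^sub>m K"
proof (rule eq_matI)
  fix k k' assume "k < dim_row (1\<^sub>m K)" "k' < dim_col (1\<^sub>m K)"
  then have k: "k < K" "k' < K" by simp_all
  have "e k \<in> tensor_indices h M" "e k' \<in> tensor_indices h M"
    using rows[OF k(1)] rows[OF k(2)] tensor_indices_mono[OF R(2)] by blast+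
  then have "interleave (e k) (e k') \<in> tensor_indices (2 ^ L) M"
    unfolding N by (rule interleave_in_tensor_indices)
  then have ds: "length (interleave (e k) (e k')) = 2 ^ L" "set (interleave (e k) (e k')) \<subseteq> {1..M}"
    by (simp_all add: tensor_indices_def)
  have root: "(1::nat) \<in> {1..2 ^ L div 2 ^ L}" and y_width: "y \<in> {1..width L r Y L}"
    using y by (simp_all add: width_def)
  have "phi r p L 1 y (interleave (e k) (e k'))
      = (if diag_pairs (r 0) (interleave (e k) (e k')) then 1 else 0)"
    by (rule phi_unit_weights[OF p r L order_refl root y_width ds])
  also have "diag_pairs (r 0) (interleave (e k) (e k')) \<longleftrightarrow> e k = e k'"
  proof -
    have "length (e k) = length (e k')" "\<forall>x\<in>set (e k). x \<le> r 0"
      using rows[OF k(1)] rows[OF k(2)] R(1) by (auto simp: tensor_indices_def)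
    then show ?thesis by (simp add: diag_pairs_interleave)
  qed
  also have "e k = e k' \<longleftrightarrow> k = k'"
    using inj_onD[OF e] k by auto
  finally show "mat K K (\<lambda>(k, k'). phi r p L 1 y (interleave (e k) (e k'))) $$ (k, k') = 1\<^sub>m K $$ (k, k')"
    using k by simp
qed simp_all

text \<open>\<open>H q\<close> gives the parameters as polynomial functions of coordinates \<open>q\<close> over \<open>J\<close>:
  \<open>H = id\<close> is the unshared and \<open>H = unshare\<close> the shared setting.\<close>
lemma cp_rank_less_null:
  fixes H :: "('i \<Rightarrow> real) \<Rightarrow> nat \<times> nat \<times> nat \<times> nat \<Rightarrow> real"
  assumes L: "L \<ge> 1" and r: "\<forall>l<L. r l > 0" and y: "y \<in> {1..Y}" and "finite J"
    and H: "\<forall>idx\<in>param_idx L M r Y. polyfun J (\<lambda>q. H q idx)"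
    and H_unit: "\<forall>idx\<in>param_idx L M r Y. H q\<^sub>0 idx = unshare unit_weights idx"
  shows "{q \<in> space (PiM J (\<lambda>_. lborel)).
            cp_rank (2 ^ L) M (phi r (H q) L 1 y) < (min (r 0) M) ^ (2 ^ L div 2)}
          \<in> null_sets (PiM J (\<lambda>_. lborel))"
proof -
  define R where "R = min (r 0) M"
  define h :: nat where "h = 2 ^ L div 2"
  have R: "R \<le> r 0" "R \<le> M" and N: "(2::nat) ^ L = 2 * h"
    using L by (simp_all add: R_def h_def flip: power_Suc)
  have root: "(1::nat) \<in> {1..2 ^ L div 2 ^ L}" and y_width: "y \<in> {1..width L r Y L}"
    using y by (simp_all add: width_def)
  let ?T = "\<lambda>q. phi r (H q) L 1 y"
  let ?S = "{q \<in> space (PiM J (\<lambda>_. lborel)). cp_rank (2 ^ L) M (?T q) < R ^ h}"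
  obtain e where e: "bij_betw e {..<R ^ h} (tensor_indices h R)"
    using ex_bij_betw_nat_finite[OF finite_tensor_indices, of h R]
    unfolding card_tensor_indices atLeast0LessThan by blast
  have rows: "e k \<in> tensor_indices h R" if "k < R ^ h" for k
    using bij_betwE[OF e] that by blast
  have rows_M: "e k \<in> tensor_indices h M" if "k < R ^ h" for k
    using rows[OF that] tensor_indices_mono[OF R(2)] by blast
  define D where "D q = det (mat (R ^ h) (R ^ h) (\<lambda>(k, k'). ?T q (interleave (e k) (e k'))))" for q
  have "polyfun J D"
    unfolding D_def
  proof (intro polyfun_det)
    fix k k' assume "k < R ^ h" "k' < R ^ h"
    then have "interleave (e k) (e k') \<in> tensor_indices (2 ^ L) M"
      unfolding N by (intro interleave_in_tensor_indices rows_M)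
    then have "length (interleave (e k) (e k')) = 2 ^ L" "set (interleave (e k) (e k')) \<subseteq> {1..M}"
      by (simp_all add: tensor_indices_def)
    then show "polyfun J (\<lambda>q. ?T q (interleave (e k) (e k')))"
      by (rule phi_polyfun[OF H order_refl root y_width])
  qed
  moreover have "D q\<^sub>0 = 1"
  proof -
    have "mat (R ^ h) (R ^ h) (\<lambda>(k, k'). ?T q\<^sub>0 (interleave (e k) (e k'))) = 1\<^sub>m (R ^ h)"
      by (rule flattening_unit_weights[OF H_unit r L y N R bij_betw_imp_inj_on[OF e]]) (fact rows)
    then show ?thesis by (simp add: D_def)
  qed
  ultimately have null: "{q \<in> space (PiM J (\<lambda>_. lborel)). D q = 0} \<in> null_sets (PiM J (\<lambda>_. lborel))"
    using polyfun_zero_set_null[OF \<open>finite J\<close>, of D q\<^sub>0] by simp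
  have "?S \<subseteq> {q \<in> space (PiM J (\<lambda>_. lborel)). D q = 0}"
  proof safe
    fix q assume "q \<in> space (PiM J (\<lambda>_. lborel))" "cp_rank (2 ^ L) M (?T q) < R ^ h"
    then obtain Z where Z: "Z < R ^ h" "cp_decomposable (2 ^ L) M Z (?T q)"
      using cp_rank_less_iff[of "2 ^ L" M "?T q" "R ^ h"] by auto
    show "D q = 0"
      unfolding D_def by (rule det_interleave_eq_0[OF Z(2)[unfolded N] Z(1) rows_M rows_M])
  qed
  moreover have "?S \<in> sets (PiM J (\<lambda>_. lborel))"
  proof (intro sets_cp_rank_less polyfun_measurable)
    fix ds assume "length ds = 2 ^ L" "set ds \<subseteq> {1..M}"
    then show "polyfun J (\<lambda>q. ?T q ds)"
      by (rule phi_polyfun[OF H order_refl root y_width])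
  qed simp
  ultimately have "?S \<in> null_sets (PiM J (\<lambda>_. lborel))"
    using null null_sets_subset by blast
  then show ?thesis by (simp add: R_def h_def)
qed

theorem theorem1:
  fixes L M Y y :: nat and r :: "nat \<Rightarrow> nat"
  assumes "L \<ge> 1"
    and "\<And>l. l < L \<Longrightarrow> r l > 0"
    and "y \<in> {1..Y}"
  shows "{p \<in> space (PiM (param_idx L M r Y) (\<lambda>_. lborel)).
            cp_rank (2 ^ L) M (phi r p L 1 y) < (min (r 0) M) ^ (2 ^ L div 2)}
          \<in> null_sets (PiM (param_idx L M r Y) (\<lambda>_. lborel))
       \<and> {q \<in> space (PiM (shared_idx L M r Y) (\<lambda>_. lborel)).
            cp_rank (2 ^ L) M (phi r (unshare q) L 1 y) < (min (r 0) M) ^ (2 ^ L div 2)}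
          \<in> null_sets (PiM (shared_idx L M r Y) (\<lambda>_. lborel))"
proof -
  have r: "\<forall>l<L. r l > 0"
    using assms(2) by blast
  have unshare_polyfun: "\<forall>idx\<in>param_idx L M r Y. polyfun (shared_idx L M r Y) (\<lambda>q. unshare q idx)"
  proof
    fix idx assume "idx \<in> param_idx L M r Y"
    moreover obtain l j g \<alpha> where idx: "idx = (l, j, g, \<alpha>)"
      by (cases idx)
    ultimately have "(l, g, \<alpha>) \<in> shared_idx L M r Y"
      by (auto simp: param_idx_def shared_idx_def)
    then show "polyfun (shared_idx L M r Y) (\<lambda>q. unshare q idx)"
      unfolding idx unshare_def by (simp add: polyfun.var)
  qed
  have id_polyfun: "\<forall>idx\<in>param_idx L M r Y. polyfun (param_idx L M r Y) (\<lambda>q. q idx)"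
    by (simp add: polyfun.var)
  show ?thesis
    using cp_rank_less_null[where H = "\<lambda>p. p" and q\<^sub>0 = "unshare unit_weights",
        OF assms(1) r assms(3) finite_param_idx id_polyfun ballI[OF refl]]
      cp_rank_less_null[where H = unshare and q\<^sub>0 = unit_weights,
        OF assms(1) r assms(3) finite_shared_idx unshare_polyfun ballI[OF refl]]
    by (rule conjI)
qed

end
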